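(* For almost all $n$-variable Boolean functions $f$ it holds that $NN(f)>\frac{2^{n/2}}{n}$; that is, the fraction of Boolean functions $f:\{0,1\}^n\to\{0,1\}$ satisfying $NN(f)>2^{n/2}/n$ tends to $1$ as $n\to\infty$.
   Context: For a Boolean function $f:\{0,1\}^n\to\{0,1\}$, a nearest neighbor representation is a pair of disjoint sets $(P,N)$ of points of $\mathbb R^n$ such that for every $a\in\{0,1\}^n$: if $f(a)=1$, there is $b\in P$ with $d(a,b)<d(a,c)$ for all $c\in N$; if $f(a)=0$, there is $b\in N$ with $d(a,b)<d(a,c)$ for all $c\in P$ ($d$ = Euclidean distance). $NN(f)$ is the minimum of $|P\cup N|$ over all nearest neighbor representations of $f$. *)

theory Defs
  imports Complex_Main "HOL-Library.FuncSet"
begin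

definition cube :: "nat \<Rightarrow> bool list set" where
  "cube n = {xs. length xs = n}"

definition rpoints :: "nat \<Rightarrow> real list set" where
  "rpoints n = {p. length p = n}"

definition edist :: "nat \<Rightarrow> bool list \<Rightarrow> real list \<Rightarrow> real" where
  "edist n a b = sqrt (\<Sum>i<n. (of_bool (a ! i) - b ! i)^2)"

definition boolfuns :: "nat \<Rightarrow> (bool list \<Rightarrow> bool) set" where
  "boolfuns n = cube n \<rightarrow>\<^sub>E (UNIV :: bool set)"

definition is_nn_rep :: "nat \<Rightarrow> (bool list \<Rightarrow> bool) \<Rightarrow> real list set \<Rightarrow> real list set \<Rightarrow> bool" where
  "is_nn_rep n f P N \<longleftrightarrow>
     P \<subseteq> rpoints n \<and> N \<subseteq> rpoints n \<and> finite P \<and> finite N \<and> P \<inter> N = {} \<and>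
     (\<forall>a\<in>cube n.
        (f a \<longrightarrow> (\<exists>b\<in>P. \<forall>c\<in>N. edist n a b < edist n a c)) \<and>
        (\<not> f a \<longrightarrow> (\<exists>b\<in>N. \<forall>c\<in>P. edist n a b < edist n a c)))"

definition NN :: "nat \<Rightarrow> (bool list \<Rightarrow> bool) \<Rightarrow> nat" where
  "NN n f = (LEAST k. \<exists>P N. is_nn_rep n f P N \<and> card (P \<union> N) = k)"

end

(*
  If (P, N) represents f, then f a holds iff some b in P is closer to a than every c in N,
  so f is an OR of |P| ANDs of |N| comparisons d(a,b) < d(a,c).  On the cube each comparison
  is a strict linear threshold, since the two squared distances differ by an affine function
  of a.  Halfspaces shatter no n + 2 points of the cube (lifting the points to (a, 1) yields a
  vanishing affine combination, as in Radon's theorem), so by Pajor's form of the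
  Sauer-Shelah lemma there are at most 2^((n+1)^2) threshold sets.  Hence at most
  (k+1)^2 * 2^((n+1)^2 * k^2/4) functions have NN(f) <= k; for k = 2^(n/2)/n this is at most
  (k+1)^2 * 2^(2^(n-1)), a vanishing fraction of the 2^(2^n) Boolean functions.
*)

theory Submission
  imports Defs "HOL-Library.Function_Algebras"
begin

(* Function_Algebras provides only the additive group of nat => real; the scaling is added here. *)
definition scale_fun :: "real \<Rightarrow> (nat \<Rightarrow> real) \<Rightarrow> nat \<Rightarrow> real" where
  "scale_fun c f = (\<lambda>i. c * f i)"

interpretation fun_vec: vector_space scale_fun
  by unfold_locales (auto simp: scale_fun_def fun_eq_iff algebra_simps)

lemma sum_fun_apply: "sum f A x = (\<Sum>a\<in>A. f a x)"
  by (induction A rule: infinite_finite_induct) auto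

lemma finite_support_dependent:
  assumes "finite V" and "d < card V" and "\<And>v i. v \<in> V \<Longrightarrow> d \<le> i \<Longrightarrow> v i = 0"
  shows "fun_vec.dependent V"
proof (rule ccontr)
  assume independent: "\<not> fun_vec.dependent V"
  define e where "e i = (\<lambda>j. if j = i then 1 else 0 :: real)" for i :: nat
  have "V \<subseteq> fun_vec.span (e ` {..<d})"
  proof
    fix v assume "v \<in> V"
    have "v = (\<Sum>i<d. scale_fun (v i) (e i))"
    proof
      fix j
      have "(\<Sum>i<d. scale_fun (v i) (e i)) j = (\<Sum>i<d. if i = j then v i else 0)"
        unfolding sum_fun_apply scale_fun_def e_def by (intro sum.cong) auto
      also have "\<dots> = v j"
        using assms(3)[OF \<open>v \<in> V\<close>, of j] by (simp add: sum.delta')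
      finally show "v j = (\<Sum>i<d. scale_fun (v i) (e i)) j" by simp
    qed
    also have "\<dots> \<in> fun_vec.span (e ` {..<d})"
      by (intro fun_vec.span_sum fun_vec.span_scale fun_vec.span_base) auto
    finally show "v \<in> fun_vec.span (e ` {..<d})" .
  qed
  with fun_vec.independent_span_bound[OF _ independent] have "card V \<le> card (e ` {..<d})"
    by blast
  also have "\<dots> \<le> d"
    using card_image_le[of "{..<d}" e] by simp
  finally show False
    using assms(2) by simp
qed

lemma sum_zero_imp_pos:
  fixes l :: "'a \<Rightarrow> real"
  assumes "finite Y" "(\<Sum>y\<in>Y. l y) = 0" "y0 \<in> Y" "l y0 \<noteq> 0"
  shows "\<exists>y\<in>Y. l y > 0"
proof (rule ccontr)
  assume "\<not> (\<exists>y\<in>Y. l y > 0)"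
  then have "\<forall>y\<in>Y. l y \<le> 0" and "l y0 < 0"
    using assms(3,4) by (auto simp: not_less less_le)
  then have "(\<Sum>y\<in>Y. l y) < (\<Sum>y\<in>Y. 0)"
    using assms(1,3) by (intro sum_strict_mono_ex1) auto
  with assms(2) show False
    by simp
qed

lemma finite_cube: "finite (cube n)"
proof -
  have "cube n = {xs. set xs \<subseteq> UNIV \<and> length xs = n}"
    by (auto simp: cube_def)
  then show ?thesis
    using finite_lists_length_eq[of "UNIV :: bool set" n] by simp
qed

lemma card_cube: "card (cube n) = 2 ^ n"
proof -
  have "cube n = {xs. set xs \<subseteq> UNIV \<and> length xs = n}"
    by (auto simp: cube_def)
  then show ?thesis
    using card_lists_length_eq[of "UNIV :: bool set" n] by simp
qed

lemma fun_vec_dependent_imageE: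
  assumes "finite Y" and "inj_on v Y" and "fun_vec.dependent (v ` Y)"
  obtains l where "\<exists>y\<in>Y. l y \<noteq> 0" and "\<And>i. (\<Sum>y\<in>Y. l y * v y i) = 0"
proof -
  obtain T u where T: "finite T" "T \<subseteq> v ` Y" "(\<Sum>x\<in>T. scale_fun (u x) x) = 0"
    and "\<exists>x\<in>T. u x \<noteq> 0"
    using assms(3) unfolding fun_vec.dependent_explicit by blast
  define l where "l y = (if v y \<in> T then u (v y) else 0)" for y
  have "(\<Sum>y\<in>Y. l y * v y i) = 0" for i
  proof -
    have "(\<Sum>y\<in>Y. l y * v y i) = (\<Sum>x\<in>v ` Y. (if x \<in> T then u x else 0) * x i)"
      by (subst sum.reindex[OF assms(2)]) (simp add: l_def)
    also have "\<dots> = (\<Sum>x\<in>T. u x * x i)"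
      using T(2) assms(1) by (intro sum.mono_neutral_cong_right) auto
    also have "\<dots> = (\<Sum>x\<in>T. scale_fun (u x) x) i"
      by (simp add: sum_fun_apply scale_fun_def)
    finally show ?thesis
      using T(3) by simp
  qed
  moreover have "\<exists>y\<in>Y. l y \<noteq> 0"
    using \<open>\<exists>x\<in>T. u x \<noteq> 0\<close> T(2) by (auto simp: l_def)
  ultimately show ?thesis
    using that by blast
qed

lemma affine_dependence_in_cube:
  assumes "Y \<subseteq> cube n" and "n + 2 \<le> card Y"
  obtains l :: "bool list \<Rightarrow> real"
  where "\<exists>y\<in>Y. l y > 0" and "\<And>i. i < n \<Longrightarrow> (\<Sum>y\<in>Y. l y * of_bool (y ! i)) = 0"
    and "(\<Sum>y\<in>Y. l y) = 0"
proof -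
  have "finite Y"
    using assms(1) finite_cube finite_subset by blast
  define lift where
    "lift y = (\<lambda>i. if i < n then of_bool (y ! i) else if i = n then 1 else 0 :: real)" for y
  have "inj_on lift Y"
  proof
    fix x y assume "x \<in> Y" "y \<in> Y" "lift x = lift y"
    have "x ! i = y ! i" if "i < n" for i
      using fun_cong[OF \<open>lift x = lift y\<close>, of i] that by (simp add: lift_def of_bool_eq_iff)
    moreover have "length x = n" "length y = n"
      using \<open>x \<in> Y\<close> \<open>y \<in> Y\<close> assms(1) by (auto simp: cube_def)
    ultimately show "x = y"
      by (intro nth_equalityI) auto
  qed
  then have "n + 1 < card (lift ` Y)"
    using assms(2) by (simp add: card_image)
  moreover have "v i = 0" if "v \<in> lift ` Y" "n + 1 \<le> i" for v i
    using that by (auto simp: lift_def)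
  ultimately have "fun_vec.dependent (lift ` Y)"
    using \<open>finite Y\<close> by (intro finite_support_dependent) auto
  then obtain l where "\<exists>y\<in>Y. l y \<noteq> 0" and combination: "\<And>i. (\<Sum>y\<in>Y. l y * lift y i) = 0"
    using fun_vec_dependent_imageE[OF \<open>finite Y\<close> \<open>inj_on lift Y\<close>] by blast
  have sum_zero: "(\<Sum>y\<in>Y. l y) = 0"
    using combination[of n] by (simp add: lift_def)
  then have "\<exists>y\<in>Y. l y > 0"
    using sum_zero_imp_pos[OF \<open>finite Y\<close> sum_zero] \<open>\<exists>y\<in>Y. l y \<noteq> 0\<close> by blast
  moreover have "(\<Sum>y\<in>Y. l y * of_bool (y ! i)) = 0" if "i < n" for i
    using combination[of i] that by (simp add: lift_def)
  ultimately show ?thesis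
    using that sum_zero by blast
qed

definition threshold_sets :: "nat \<Rightarrow> bool list set set" where
  "threshold_sets n = {{a \<in> cube n. (\<Sum>i<n. of_bool (a ! i) * w i) < t} | w (t :: real). True}"

definition shatters :: "'a set set \<Rightarrow> 'a set \<Rightarrow> bool" where
  "shatters F Y \<longleftrightarrow> (\<forall>B\<subseteq>Y. \<exists>A\<in>F. A \<inter> Y = B)"

lemma card_shattered_by_threshold_sets:
  assumes "Y \<subseteq> cube n" and "shatters (threshold_sets n) Y"
  shows "card Y \<le> n + 1"
proof (rule ccontr)
  assume "\<not> card Y \<le> n + 1"
  then have "n + 2 \<le> card Y"
    by simp
  then obtain l :: "bool list \<Rightarrow> real" where pos: "\<exists>y\<in>Y. l y > 0"
    and coords: "\<And>i. i < n \<Longrightarrow> (\<Sum>y\<in>Y. l y * of_bool (y ! i)) = 0"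
    and total: "(\<Sum>y\<in>Y. l y) = 0"
    using affine_dependence_in_cube[OF assms(1)] by blast
  have "{y \<in> Y. l y > 0} \<subseteq> Y"
    by blast
  then obtain w and t :: real
    where separates: "{a \<in> cube n. (\<Sum>i<n. of_bool (a ! i) * w i) < t} \<inter> Y = {y \<in> Y. l y > 0}"
    using assms(2) unfolding shatters_def threshold_sets_def by blast
  (* h is negative exactly where l is positive, yet its l-weighted sum vanishes. *)
  define h where "h y = (\<Sum>i<n. of_bool (y ! i) * w i) - t" for y
  have "(\<Sum>y\<in>Y. l y * h y) = (\<Sum>i<n. w i * (\<Sum>y\<in>Y. l y * of_bool (y ! i))) - t * (\<Sum>y\<in>Y. l y)"
    unfolding h_def right_diff_distrib sum_subtractf sum_distrib_left sum_distrib_right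
    by (subst sum.swap) (simp add: mult_ac)
  also have "\<dots> = 0"
    using coords total by simp
  finally have "(\<Sum>y\<in>Y. l y * h y) = 0" .
  moreover have "(\<Sum>y\<in>Y. l y * h y) < (\<Sum>y\<in>Y. 0)"
  proof (rule sum_strict_mono_ex1)
    show "finite Y"
      using assms(1) finite_cube finite_subset by blast
    have "l y > 0 \<longleftrightarrow> h y < 0" if "y \<in> Y" for y
      using separates that assms(1) by (auto simp: h_def)
    then show "\<forall>y\<in>Y. l y * h y \<le> 0" "\<exists>y\<in>Y. l y * h y < 0"
      using pos by (metis less_imp_le mult_pos_neg mult_nonpos_nonneg not_le)+
  qed
  ultimately show False
    by simp
qed

lemma shatters_mono: "F \<subseteq> G \<Longrightarrow> shatters F Y \<Longrightarrow> shatters G Y"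
  unfolding shatters_def by (metis subsetD)

lemma shatters_Diff_image:
  assumes "x \<notin> Y" and "shatters ((\<lambda>A. A - {x}) ` F) Y"
  shows "shatters F Y"
  unfolding shatters_def
proof (intro allI impI)
  fix B assume "B \<subseteq> Y"
  then obtain A where "A \<in> F" "(A - {x}) \<inter> Y = B"
    using assms(2) unfolding shatters_def by blast
  then show "\<exists>A\<in>F. A \<inter> Y = B"
    using assms(1) by blast
qed

lemma shatters_insert:
  assumes "x \<notin> Y"
    and "shatters {A \<in> F. x \<notin> A} Y" and "shatters ((\<lambda>A. A - {x}) ` {A \<in> F. x \<in> A}) Y"
  shows "shatters F (insert x Y)"
  unfolding shatters_def
proof (intro allI impI)
  fix B assume B: "B \<subseteq> insert x Y"
  show "\<exists>A\<in>F. A \<inter> insert x Y = B"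
  proof (cases "x \<in> B")
    case True
    have "B - {x} \<subseteq> Y"
      using B by blast
    then obtain A where "A \<in> F" "x \<in> A" "(A - {x}) \<inter> Y = B - {x}"
      using assms(3) unfolding shatters_def by blast
    then show ?thesis
      using True by blast
  next
    case False
    then obtain A where "A \<in> F" "x \<notin> A" "A \<inter> Y = B"
      using assms(2) B unfolding shatters_def by (metis (no_types, lifting) mem_Collect_eq subset_insert)
    then show ?thesis
      using False by blast
  qed
qed

lemma card_shattered_split:
  assumes "finite X" and "x \<notin> X"
  shows "card {Y. Y \<subseteq> X \<and> shatters {A \<in> F. x \<notin> A} Y}
           + card {Y. Y \<subseteq> X \<and> shatters ((\<lambda>A. A - {x}) ` {A \<in> F. x \<in> A}) Y}
         \<le> card {Y. Y \<subseteq> insert x X \<and> shatters F Y}"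
proof -
  define F0 where "F0 = {A \<in> F. x \<notin> A}"
  define F1 where "F1 = (\<lambda>A. A - {x}) ` {A \<in> F. x \<in> A}"
  define S where "S G = {Y. Y \<subseteq> X \<and> shatters G Y}" for G
  have "finite (S G)" for G
    using assms(1) by (simp add: S_def)
  have "inj_on (insert x) (S F0 \<inter> S F1)"
    using assms(2) by (intro inj_onI) (auto simp: S_def insert_ident)
  with card_Un_Int[OF \<open>finite (S F0)\<close> \<open>finite (S F1)\<close>]
  have "card (S F0) + card (S F1) = card (S F0 \<union> S F1) + card (insert x ` (S F0 \<inter> S F1))"
    by (simp add: card_image)
  also have "\<dots> = card (S F0 \<union> S F1 \<union> insert x ` (S F0 \<inter> S F1))"
    using assms by (intro card_Un_disjoint[symmetric]) (auto simp: S_def)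
  also have "\<dots> \<le> card {Y. Y \<subseteq> insert x X \<and> shatters F Y}"
  proof (intro card_mono)
    have "shatters F Y" if "Y \<in> S F0 \<union> S F1" for Y
    proof -
      have "x \<notin> Y"
        using that assms(2) by (auto simp: S_def)
      from that consider "shatters F0 Y" | "shatters F1 Y"
        by (auto simp: S_def)
      then show ?thesis
      proof cases
        case 1
        then show ?thesis
          by (rule shatters_mono[rotated]) (auto simp: F0_def)
      next
        case 2
        then have "shatters {A \<in> F. x \<in> A} Y"
          unfolding F1_def by (rule shatters_Diff_image[OF \<open>x \<notin> Y\<close>])
        then show ?thesis
          by (rule shatters_mono[rotated]) auto
      qed
    qed
    moreover have "shatters F (insert x Y)" if "Y \<in> S F0 \<inter> S F1" for Y
      using that assms(2) shatters_insert[of x Y F] by (auto simp: S_def F0_def F1_def)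
    ultimately show "S F0 \<union> S F1 \<union> insert x ` (S F0 \<inter> S F1) \<subseteq> {Y. Y \<subseteq> insert x X \<and> shatters F Y}"
      by (auto simp: S_def)
  qed (use assms(1) in simp)
  finally show ?thesis
    by (simp only: S_def F0_def F1_def)
qed

lemma card_le_card_shattered:
  assumes "finite X" and "F \<subseteq> Pow X"
  shows "card F \<le> card {Y. Y \<subseteq> X \<and> shatters F Y}"
  using assms
proof (induction X arbitrary: F rule: finite_induct)
  case empty
  show ?case
  proof (cases "F = {}")
    case False
    with empty.prems have "F = {{}}"
      by auto
    moreover from this have "{Y. Y \<subseteq> {} \<and> shatters F Y} = {{}}"
      by (auto simp: shatters_def)
    ultimately show ?thesis
      by simp
  qed simp
next
  case (insert x X)
  define F0 where "F0 = {A \<in> F. x \<notin> A}"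
  define F1 where "F1 = (\<lambda>A. A - {x}) ` {A \<in> F. x \<in> A}"
  have "finite F"
    using insert.prems insert.hyps(1) by (meson finite_Pow_iff finite_insert finite_subset)
  have "F = F0 \<union> {A \<in> F. x \<in> A}" and "F0 \<inter> {A \<in> F. x \<in> A} = {}"
    by (auto simp: F0_def)
  then have "card F = card F0 + card {A \<in> F. x \<in> A}"
    using \<open>finite F\<close> by (metis card_Un_disjoint finite_Un)
  also have "card {A \<in> F. x \<in> A} = card F1"
    unfolding F1_def by (rule card_image[symmetric]) (rule inj_onI, metis insert_Diff mem_Collect_eq)
  also have "card F0 + card F1 \<le> card {Y. Y \<subseteq> X \<and> shatters F0 Y} + card {Y. Y \<subseteq> X \<and> shatters F1 Y}"
  proof -
    have "F0 \<subseteq> Pow X" "F1 \<subseteq> Pow X"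
      using insert.prems by (auto simp: F0_def F1_def)
    then show ?thesis
      by (intro add_mono insert.IH)
  qed
  also have "\<dots> \<le> card {Y. Y \<subseteq> insert x X \<and> shatters F Y}"
    unfolding F0_def F1_def by (rule card_shattered_split[OF insert.hyps])
  finally show ?case .
qed

lemma sum_power_le_Suc_power: "(\<Sum>k\<le>d. m ^ k) \<le> (m + 1 :: nat) ^ d"
proof (induction d)
  case (Suc d)
  have "(\<Sum>k\<le>Suc d. m ^ k) = 1 + m * (\<Sum>k\<le>d. m ^ k)"
    by (simp only: sum.atMost_Suc_shift power_Suc sum_distrib_left) simp
  also have "\<dots> \<le> 1 + m * (m + 1) ^ d"
    using Suc by simp
  also have "\<dots> \<le> (m + 1) ^ Suc d"
    by simp
  finally show ?case .
qed simp

lemma card_subsets_card_le: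
  assumes "finite X"
  shows "card {Y. Y \<subseteq> X \<and> card Y \<le> d} \<le> (card X + 1) ^ d"
proof -
  have "{Y. Y \<subseteq> X \<and> card Y \<le> d} = (\<Union>k\<le>d. {Y. Y \<subseteq> X \<and> card Y = k})"
    by auto
  then have "card {Y. Y \<subseteq> X \<and> card Y \<le> d} \<le> (\<Sum>k\<le>d. card {Y. Y \<subseteq> X \<and> card Y = k})"
    using card_UN_le[of "{..d}" "\<lambda>k. {Y. Y \<subseteq> X \<and> card Y = k}"] by simp
  also have "\<dots> = (\<Sum>k\<le>d. card X choose k)"
    using n_subsets[OF assms] by simp
  also have "\<dots> \<le> (\<Sum>k\<le>d. card X ^ k)"
    by (intro sum_mono) (metis binomial_eq_0 binomial_le_pow not_le zero_le)
  also have "\<dots> \<le> (card X + 1) ^ d"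
    by (rule sum_power_le_Suc_power)
  finally show ?thesis .
qed

lemma threshold_sets_subset_Pow: "threshold_sets n \<subseteq> Pow (cube n)"
  by (auto simp: threshold_sets_def)

lemma finite_threshold_sets: "finite (threshold_sets n)"
  by (rule finite_subset[OF threshold_sets_subset_Pow]) (simp add: finite_cube)

lemma card_threshold_sets: "card (threshold_sets n) \<le> 2 ^ (n + 1)\<^sup>2"
proof -
  have "card (threshold_sets n) \<le> card {Y. Y \<subseteq> cube n \<and> shatters (threshold_sets n) Y}"
    by (rule card_le_card_shattered[OF finite_cube threshold_sets_subset_Pow])
  also have "\<dots> \<le> card {Y. Y \<subseteq> cube n \<and> card Y \<le> n + 1}"
    using card_shattered_by_threshold_sets finite_cube by (intro card_mono) auto
  also have "\<dots> \<le> (2 ^ n + 1) ^ (n + 1)"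
    using card_subsets_card_le[OF finite_cube, of n "n + 1"] by (simp add: card_cube)
  also have "\<dots> \<le> (2 ^ (n + 1)) ^ (n + 1)"
    by (intro power_mono) auto
  also have "\<dots> = 2 ^ (n + 1)\<^sup>2"
    by (simp add: power_mult[symmetric] power2_eq_square power_add)
  finally show ?thesis .
qed

lemma edist_less_iff:
  "edist n a b < edist n a c \<longleftrightarrow>
   (\<Sum>i<n. of_bool (a ! i) * (2 * c ! i - 2 * b ! i)) < (\<Sum>i<n. (c ! i)\<^sup>2 - (b ! i)\<^sup>2)"
proof -
  have "(\<Sum>i<n. (of_bool (a ! i) - b ! i)\<^sup>2) - (\<Sum>i<n. (of_bool (a ! i) - c ! i)\<^sup>2)
      = (\<Sum>i<n. of_bool (a ! i) * (2 * c ! i - 2 * b ! i)) - (\<Sum>i<n. (c ! i)\<^sup>2 - (b ! i)\<^sup>2)"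
    unfolding sum_subtractf[symmetric] by (rule sum.cong) (simp_all add: power2_eq_square algebra_simps)
  then show ?thesis
    unfolding edist_def real_sqrt_less_iff by linarith
qed

lemma closer_set_in_threshold_sets: "{a \<in> cube n. edist n a b < edist n a c} \<in> threshold_sets n"
  unfolding threshold_sets_def edist_less_iff mem_Collect_eq
  by (intro exI[of _ "\<lambda>i. 2 * c ! i - 2 * b ! i"] exI[of _ "\<Sum>i<n. (c ! i)\<^sup>2 - (b ! i)\<^sup>2"]) simp

lemma edist_map_of_bool_less:
  assumes "a \<in> cube n" and "a' \<in> cube n" and "a \<noteq> a'"
  shows "edist n a (map of_bool a) < edist n a (map of_bool a')"
proof -
  have "length a = n" "length a' = n"
    using assms by (auto simp: cube_def)
  then have "\<not> (\<forall>i<n. a ! i = a' ! i)"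
    using assms(3) nth_equalityI[of a a'] by auto
  then obtain i where "i < n" "a ! i \<noteq> a' ! i"
    by blast
  then have "(\<Sum>j<n. (of_bool (a ! j) - map of_bool a' ! j)\<^sup>2) > (0 :: real)"
    using \<open>length a' = n\<close> by (intro sum_pos2[of "{..<n}" i]) auto
  then show ?thesis
    using \<open>length a = n\<close> by (simp add: edist_def)
qed

lemma is_nn_rep_cube_points:
  assumes "f \<in> boolfuns n"
  shows "is_nn_rep n f (map of_bool ` {a \<in> cube n. f a}) (map of_bool ` {a \<in> cube n. \<not> f a})"
    (is "is_nn_rep n f ?P ?N")
  unfolding is_nn_rep_def
proof (intro conjI ballI)
  show "?P \<subseteq> rpoints n" "?N \<subseteq> rpoints n"
    by (auto simp: rpoints_def cube_def)
  show "finite ?P" "finite ?N"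
    using finite_cube by auto
  have "inj (map (of_bool :: bool \<Rightarrow> real))"
    by (rule inj_mapI) (auto simp: inj_def)
  then show "?P \<inter> ?N = {}"
    by (auto simp: inj_def)
  fix a assume a: "a \<in> cube n"
  show "f a \<longrightarrow> (\<exists>b\<in>?P. \<forall>c\<in>?N. edist n a b < edist n a c)"
    using a edist_map_of_bool_less[OF a] by blast
  show "\<not> f a \<longrightarrow> (\<exists>b\<in>?N. \<forall>c\<in>?P. edist n a b < edist n a c)"
    using a edist_map_of_bool_less[OF a] by blast
qed

lemma NN_attained:
  assumes "f \<in> boolfuns n"
  obtains P N where "is_nn_rep n f P N" and "card (P \<union> N) = NN n f"
proof -
  have "\<exists>k P N. is_nn_rep n f P N \<and> card (P \<union> N) = k"
    using is_nn_rep_cube_points[OF assms] by blast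
  then have "\<exists>P N. is_nn_rep n f P N \<and> card (P \<union> N) = NN n f"
    unfolding NN_def by (rule LeastI_ex)
  then show ?thesis
    using that by blast
qed

lemma is_nn_rep_iff:
  assumes "is_nn_rep n f P N" and "a \<in> cube n"
  shows "f a \<longleftrightarrow> (\<exists>b\<in>P. \<forall>c\<in>N. edist n a b < edist n a c)"
proof
  assume "\<exists>b\<in>P. \<forall>c\<in>N. edist n a b < edist n a c"
  then obtain b where "b \<in> P" "\<forall>c\<in>N. edist n a b < edist n a c"
    by blast
  moreover have "\<not> f a \<Longrightarrow> \<exists>b'\<in>N. \<forall>c\<in>P. edist n a b' < edist n a c"
    using assms by (auto simp: is_nn_rep_def)
  ultimately show "f a"
    by (meson less_asym)
qed (use assms in \<open>auto simp: is_nn_rep_def\<close>)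

definition or_of_ands :: "nat \<Rightarrow> nat \<Rightarrow> nat \<Rightarrow> (nat \<times> nat \<Rightarrow> bool list set) \<Rightarrow> bool list \<Rightarrow> bool" where
  "or_of_ands n p q g = (\<lambda>a. if a \<in> cube n then \<exists>i<p. \<forall>j<q. a \<in> g (i, j) else undefined)"

lemma is_nn_rep_eq_or_of_ands:
  assumes "f \<in> boolfuns n" and "is_nn_rep n f P N"
    and "bij_betw bp {..<p} P" and "bij_betw bq {..<q} N"
  shows "f = or_of_ands n p q
           (\<lambda>(i, j)\<in>{..<p} \<times> {..<q}. {a \<in> cube n. edist n a (bp i) < edist n a (bq j)})"
    (is "f = or_of_ands n p q ?g")
proof
  fix a
  show "f a = or_of_ands n p q ?g a"
  proof (cases "a \<in> cube n")
    case True
    have "f a \<longleftrightarrow> (\<exists>b\<in>P. \<forall>c\<in>N. edist n a b < edist n a c)"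
      by (rule is_nn_rep_iff[OF assms(2) True])
    also have "\<dots> \<longleftrightarrow> (\<exists>i<p. \<forall>j<q. edist n a (bp i) < edist n a (bq j))"
      using assms(3,4) unfolding bij_betw_def by (auto simp: lessThan_def)
    finally show ?thesis
      using True by (auto simp: or_of_ands_def)
  next
    case False
    have "f a = undefined"
      by (rule PiE_arb[OF assms(1)[unfolded boolfuns_def] False])
    then show ?thesis
      using False by (simp add: or_of_ands_def)
  qed
qed

lemma NN_le_imp_or_of_ands:
  assumes "f \<in> boolfuns n" and "NN n f \<le> k"
  obtains p q g where "p + q \<le> k" and "g \<in> {..<p} \<times> {..<q} \<rightarrow>\<^sub>E threshold_sets n"
    and "f = or_of_ands n p q g"
proof -
  obtain P N where rep: "is_nn_rep n f P N" and card_PN: "card (P \<union> N) = NN n f"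
    using NN_attained[OF assms(1)] by blast
  then have "finite P" "finite N" "P \<inter> N = {}"
    by (auto simp: is_nn_rep_def)
  then have "card P + card N \<le> k"
    using card_PN assms(2) card_Un_disjoint by metis
  obtain bp where bp: "bij_betw bp {..<card P} P"
    using ex_bij_betw_nat_finite[OF \<open>finite P\<close>] by (auto simp: atLeast0LessThan)
  obtain bq where bq: "bij_betw bq {..<card N} N"
    using ex_bij_betw_nat_finite[OF \<open>finite N\<close>] by (auto simp: atLeast0LessThan)
  have "(\<lambda>(i, j)\<in>{..<card P} \<times> {..<card N}. {a \<in> cube n. edist n a (bp i) < edist n a (bq j)})
          \<in> {..<card P} \<times> {..<card N} \<rightarrow>\<^sub>E threshold_sets n"
    using closer_set_in_threshold_sets by auto
  with is_nn_rep_eq_or_of_ands[OF assms(1) rep bp bq] \<open>card P + card N \<le> k\<close> show ?thesis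
    using that by blast
qed

lemma mult_le_square_div_4:
  fixes p q k :: nat
  assumes "p + q \<le> k"
  shows "p * q \<le> k\<^sup>2 div 4"
proof -
  have "int (4 * (p * q)) \<le> int ((p + q)\<^sup>2)"
    using zero_le_power2[of "int p - int q"] by (simp add: power2_eq_square algebra_simps)
  also have "\<dots> \<le> int (k\<^sup>2)"
    using assms by (simp add: power_mono)
  finally show ?thesis
    by linarith
qed

lemma card_NN_le:
  "card {f \<in> boolfuns n. NN n f \<le> k} \<le> (k + 1)\<^sup>2 * 2 ^ ((n + 1)\<^sup>2 * (k\<^sup>2 div 4))"
proof -
  define I where "I = {(p, q). p + q \<le> k}"
  define circuits where
    "circuits = (\<lambda>(p, q). or_of_ands n p q ` ({..<p} \<times> {..<q} \<rightarrow>\<^sub>E threshold_sets n))"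
  have "I \<subseteq> {..k} \<times> {..k}"
    by (auto simp: I_def)
  then have "finite I" and card_I: "card I \<le> (k + 1)\<^sup>2"
    using card_mono[of "{..k} \<times> {..k}" I] by (auto intro: finite_subset simp: power2_eq_square)
  have card_circuits: "card (circuits pq) \<le> 2 ^ ((n + 1)\<^sup>2 * (k\<^sup>2 div 4))" if "pq \<in> I" for pq
  proof -
    obtain p q where pq: "pq = (p, q)" and "p + q \<le> k"
      using \<open>pq \<in> I\<close> unfolding I_def by blast
    have "card (circuits pq) \<le> card ({..<p} \<times> {..<q} \<rightarrow>\<^sub>E threshold_sets n)"
      unfolding circuits_def pq by (simp add: card_image_le finite_PiE finite_threshold_sets)
    also have "\<dots> = card (threshold_sets n) ^ (p * q)"
      by (simp add: card_funcsetE card_cartesian_product)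
    also have "\<dots> \<le> (2 ^ (n + 1)\<^sup>2) ^ (p * q)"
      by (rule power_mono[OF card_threshold_sets]) simp
    also have "\<dots> \<le> 2 ^ ((n + 1)\<^sup>2 * (k\<^sup>2 div 4))"
      unfolding power_mult[symmetric]
      using mult_le_square_div_4[OF \<open>p + q \<le> k\<close>] by (intro power_increasing) auto
    finally show ?thesis .
  qed
  have "{f \<in> boolfuns n. NN n f \<le> k} \<subseteq> (\<Union>pq\<in>I. circuits pq)"
    by (auto simp: I_def circuits_def elim!: NN_le_imp_or_of_ands)
  then have "card {f \<in> boolfuns n. NN n f \<le> k} \<le> card (\<Union>pq\<in>I. circuits pq)"
    using \<open>finite I\<close> by (intro card_mono) (auto simp: circuits_def finite_PiE finite_threshold_sets)
  also have "\<dots> \<le> (\<Sum>pq\<in>I. card (circuits pq))"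
    by (rule card_UN_le[OF \<open>finite I\<close>])
  also have "\<dots> \<le> card I * 2 ^ ((n + 1)\<^sup>2 * (k\<^sup>2 div 4))"
    using sum_mono[OF card_circuits] by simp
  also have "\<dots> \<le> (k + 1)\<^sup>2 * 2 ^ ((n + 1)\<^sup>2 * (k\<^sup>2 div 4))"
    using card_I by simp
  finally show ?thesis .
qed

lemma card_boolfuns: "card (boolfuns n) = 2 ^ 2 ^ n"
  unfolding boolfuns_def by (simp add: card_funcsetE finite_cube card_cube)

lemma finite_boolfuns: "finite (boolfuns n)"
  unfolding boolfuns_def by (simp add: finite_PiE finite_cube)

lemma three_mult_le_two_power: "6 \<le> n \<Longrightarrow> 3 * n \<le> 2 ^ (n - 1)"
proof (induction n rule: nat_induct_at_least)
  case (Suc m)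
  then have "(2 :: nat) ^ (Suc m - 1) = 2 * 2 ^ (m - 1)"
    by (cases m) auto
  then show ?case
    using Suc by simp
qed simp

lemma exponent_le_half_cube:
  assumes "3 \<le> n" and "(k * n)\<^sup>2 \<le> 2 ^ n"
  shows "(n + 1)\<^sup>2 * (k\<^sup>2 div 4) \<le> 2 ^ (n - 1)"
proof -
  have "3 * n \<le> n * n"
    using mult_le_mono1[OF assms(1), of n] by simp
  moreover have "(n + 1)\<^sup>2 = n * n + 2 * n + 1" "n\<^sup>2 = n * n"
    by (simp_all add: power2_eq_square algebra_simps)
  ultimately have "(n + 1)\<^sup>2 \<le> 2 * n\<^sup>2"
    using assms(1) by linarith
  have "4 * (k\<^sup>2 div 4) \<le> k\<^sup>2"
    by (metis div_times_less_eq_dividend mult.commute)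
  then have "4 * ((n + 1)\<^sup>2 * (k\<^sup>2 div 4)) \<le> (n + 1)\<^sup>2 * k\<^sup>2"
    by (metis mult.left_commute mult_le_mono2)
  also have "\<dots> \<le> 2 * n\<^sup>2 * k\<^sup>2"
    using \<open>(n + 1)\<^sup>2 \<le> 2 * n\<^sup>2\<close> by simp
  also have "\<dots> \<le> 2 * 2 ^ n"
    using assms(2) by (simp add: power_mult_distrib mult.commute)
  also have "\<dots> = 4 * 2 ^ (n - 1)"
    using assms(1) by (cases n) auto
  finally show ?thesis
    by simp
qed

lemma card_NN_le_fraction:
  assumes "6 \<le> n" and "(k * n)\<^sup>2 \<le> 2 ^ n"
  shows "card {f \<in> boolfuns n. NN n f \<le> k} * 2 ^ n \<le> 4 * card (boolfuns n)"
proof -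
  define X :: nat where "X = 2 ^ 2 ^ (n - 1)"
  have "card (boolfuns n) = X * X"
    using assms(1) by (cases n) (auto simp: card_boolfuns X_def power_add[symmetric] mult_2)
  have "k \<le> (k * n)\<^sup>2"
    using assms(1) by (simp add: power2_eq_square)
  then have "k + 1 \<le> 2 * 2 ^ n"
    using assms(2) one_le_power[of "2 :: nat" n] by linarith
  then have "(k + 1)\<^sup>2 \<le> (2 * 2 ^ n)\<^sup>2"
    by (rule power_mono) simp
  also have "\<dots> = 4 * 4 ^ n"
    by (simp add: power2_eq_square power_mult_distrib[symmetric])
  finally have "(k + 1)\<^sup>2 \<le> 4 * 4 ^ n" .
  have "(8 :: nat) ^ n = 2 ^ (3 * n)"
    by (simp add: power_mult)
  also have "\<dots> \<le> X"
    unfolding X_def by (rule power_increasing[OF three_mult_le_two_power[OF assms(1)]]) simp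
  finally have "8 ^ n \<le> X" .
  have "card {f \<in> boolfuns n. NN n f \<le> k} \<le> (k + 1)\<^sup>2 * 2 ^ ((n + 1)\<^sup>2 * (k\<^sup>2 div 4))"
    by (rule card_NN_le)
  also have "\<dots> \<le> (k + 1)\<^sup>2 * X"
    unfolding X_def using exponent_le_half_cube[OF _ assms(2)] assms(1)
    by (intro mult_le_mono2 power_increasing) auto
  finally have "card {f \<in> boolfuns n. NN n f \<le> k} * 2 ^ n \<le> (k + 1)\<^sup>2 * X * 2 ^ n"
    by simp
  also have "\<dots> \<le> 4 * 4 ^ n * 2 ^ n * X"
    using \<open>(k + 1)\<^sup>2 \<le> 4 * 4 ^ n\<close> by simp
  also have "\<dots> = 4 * 8 ^ n * X"
    by (simp add: power_mult_distrib[symmetric])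
  also have "\<dots> \<le> 4 * card (boolfuns n)"
    using \<open>8 ^ n \<le> X\<close> \<open>card (boolfuns n) = X * X\<close> by simp
  finally show ?thesis .
qed

lemma nat_floor_bound_sq: "(nat \<lfloor>2 powr (real n / 2) / real n\<rfloor> * n)\<^sup>2 \<le> 2 ^ n"
proof (cases "n = 0")
  case False
  define m where "m = nat \<lfloor>2 powr (real n / 2) / real n\<rfloor>"
  have "real m \<le> 2 powr (real n / 2) / real n"
    unfolding m_def by (rule of_nat_floor) simp
  then have "real m * real n \<le> 2 powr (real n / 2)"
    using False by (simp add: pos_le_divide_eq)
  then have "(real m * real n)\<^sup>2 \<le> (2 powr (real n / 2))\<^sup>2"
    by (intro power_mono) auto
  also have "\<dots> = 2 ^ n"
    by (simp add: powr_realpow[symmetric] powr_powr)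
  finally have "real ((m * n)\<^sup>2) \<le> real (2 ^ n)"
    by simp
  then show ?thesis
    unfolding m_def[symmetric] of_nat_le_iff .
qed simp

lemma less_of_nat_iff_nat_floor_less: "0 \<le> x \<Longrightarrow> x < real m \<longleftrightarrow> nat \<lfloor>x\<rfloor> < m"
  by (metis le_nat_floor not_le of_nat_floor of_nat_le_iff order.trans)

lemma fraction_small_NN_tendsto_zero:
  "(\<lambda>n. real (card {f \<in> boolfuns n. NN n f \<le> nat \<lfloor>2 powr (real n / 2) / real n\<rfloor>})
         / real (card (boolfuns n))) \<longlonglongrightarrow> 0"
  (is "?ratio \<longlonglongrightarrow> 0")
proof (rule tendsto_sandwich)
  show "\<forall>\<^sub>F n in sequentially. 0 \<le> ?ratio n"
    by simp
  show "\<forall>\<^sub>F n in sequentially. ?ratio n \<le> 4 / 2 ^ n"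
    unfolding eventually_sequentially
  proof (intro exI allI impI)
    fix n :: nat
    let ?bad = "{f \<in> boolfuns n. NN n f \<le> nat \<lfloor>2 powr (real n / 2) / real n\<rfloor>}"
    assume "6 \<le> n"
    then have "card ?bad * 2 ^ n \<le> 4 * card (boolfuns n)"
      by (rule card_NN_le_fraction[OF _ nat_floor_bound_sq])
    then have "real (card ?bad) * 2 ^ n \<le> 4 * real (card (boolfuns n))"
      using of_nat_le_iff[of "card ?bad * 2 ^ n" "4 * card (boolfuns n)", where 'a = real]
      by simp
    then show "?ratio n \<le> 4 / 2 ^ n"
      by (simp add: card_boolfuns field_simps)
  qed
qed (auto intro: LIMSEQ_divide_realpow_zero)

theorem theorem5:
  shows "(\<lambda>n. real (card {f \<in> boolfuns n. real (NN n f) > 2 powr (real n / 2) / real n})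
              / real (card (boolfuns n))) \<longlonglongrightarrow> 1"
proof -
  define bad where "bad n = {f \<in> boolfuns n. NN n f \<le> nat \<lfloor>2 powr (real n / 2) / real n\<rfloor>}" for n
  have "{f \<in> boolfuns n. real (NN n f) > 2 powr (real n / 2) / real n} = boolfuns n - bad n" for n
    by (auto simp: bad_def less_of_nat_iff_nat_floor_less)
  moreover have "real (card (boolfuns n - bad n)) / real (card (boolfuns n))
                   = 1 - real (card (bad n)) / real (card (boolfuns n))" for n
    using card_mono[OF finite_boolfuns, of "bad n"]
    by (simp add: bad_def card_Diff_subset finite_boolfuns of_nat_diff card_boolfuns diff_divide_distrib)
  ultimately show ?thesis
    using tendsto_diff[OF tendsto_const[of 1] fraction_small_NN_tendsto_zero] by (simp add: bad_def)
qed

end
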